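(* Let $\Sigma$ be an $N$-fan in $V$ that is relatively full-dimensional. Then the $R$-module $\mathrm{Pic}_W(\Sigma)$ is free (of finite rank).
   Context: Let $R\subseteq\mathbb{R}$ be a principal ideal subring with field of fractions $K\subseteq\mathbb{R}$. Let $V$ be a real vector space of finite dimension $n$, let $N\subseteq V$ be a lattice (a free $\mathbb{Z}$-submodule of rank $n$ spanning $V$), and let $W\subseteq V$ be the $R$-submodule generated by $N$. Put $W^*=\{u\in V^*\mid u(W)\subseteq R\}$, identified with $\mathrm{Hom}_R(W,R)$. An $N$-fan is a finite set $\Sigma$ of sharp (containing no line) polyhedral cones in $V$, each the conic hull of a finite subset of $N$, such that every face of a cone of $\Sigma$ lies in $\Sigma$ and the intersection of two cones of $\Sigma$ is a face of each. Write $\tau\preccurlyeq\sigma$ if $\tau$ is a face of $\sigma$. For a cone $\sigma$ put $\sigma^\perp=\{u\in V^*\mid u(\sigma)=0\}$, $\sigma^\perp_{W^*}=\sigma^\perp\cap W^*$, and $\sigma^\vee=\{u\in V^*\mid u(\sigma)\subseteq\mathbb{R}_{\ge0}\}$. Let $\langle\Sigma\rangle$ be the real span of $\bigcup\Sigma$; $\Sigma$ is relatively full-dimensional if $\Sigma$ contains a cone of dimension $\dim\langle\Sigma\rangle$. Picard module: let $P=(W^* )^\Sigma/\prod_{\sigma\in\Sigma}\sigma^\perp_{W^*}$, the class of a family $(m_\sigma)_{\sigma}$ being written $(m_\sigma+\sigma^\vee)_\sigma$. Let $\overline P\subseteq P$ be the submodule of classes of families with $m_\sigma-m_\tau\in\tau^\perp$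 for all $\tau\preccurlyeq\sigma\in\Sigma$ (this condition does not depend on the representative), let $K_W\subseteq\overline P$ be the image of the diagonal map $W^*\to P$, $m\mapsto(m+\sigma^\vee)_\sigma$, and let $\mathrm{Pic}_W(\Sigma)=\overline P/K_W$. *)

theory Defs
  imports "HOL-Analysis.Analysis"
begin

definition subring_of_reals :: "real set \<Rightarrow> bool" where
  "subring_of_reals R \<longleftrightarrow> 0 \<in> R \<and> 1 \<in> R \<and>
     (\<forall>x\<in>R. \<forall>y\<in>R. x + y \<in> R \<and> x - y \<in> R \<and> x * y \<in> R)"

definition real_subring_ideal :: "real set \<Rightarrow> real set \<Rightarrow> bool" where
  "real_subring_ideal R I \<longleftrightarrow> I \<subseteq> R \<and> 0 \<in> I \<and>
     (\<forall>x\<in>I. \<forall>y\<in>I. x + y \<in> I \<and> x - y \<in> I) \<and> (\<forall>r\<in>R. \<forall>x\<in>I. r * x \<in> I)"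

text \<open>A subring of the reals (automatically an integral domain) in which every ideal is principal.\<close>
definition principal_ideal_subring :: "real set \<Rightarrow> bool" where
  "principal_ideal_subring R \<longleftrightarrow> subring_of_reals R \<and>
     (\<forall>I. real_subring_ideal R I \<longrightarrow> (\<exists>a\<in>R. I = {r * a | r. r \<in> R}))"

text \<open>N is a lattice in V: the integer span of a real basis of V (equivalently a free
  Z-submodule of rank dim V spanning V).\<close>
definition is_lattice :: "'a::euclidean_space set \<Rightarrow> bool" where
  "is_lattice N \<longleftrightarrow> (\<exists>B. independent B \<and> span B = UNIV \<and>
      N = {(\<Sum>b\<in>B. c b *\<^sub>R b) | c. \<forall>b\<in>B. c b \<in> \<int>})"

definition Rspan :: "real set \<Rightarrow> 'a::real_vector set \<Rightarrow> 'a set" where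
  "Rspan R S = {(\<Sum>x\<in>F. c x *\<^sub>R x) | F c. finite F \<and> F \<subseteq> S \<and> (\<forall>x\<in>F. c x \<in> R)}"

text \<open>Linear functionals V \<rightarrow> \<real> represent V*.\<close>
definition dual_module :: "real set \<Rightarrow> 'a::euclidean_space set \<Rightarrow> ('a \<Rightarrow> real) set" where
  "dual_module R W = {u. linear u \<and> (\<forall>w\<in>W. u w \<in> R)}"

definition perp :: "'a::euclidean_space set \<Rightarrow> ('a \<Rightarrow> real) set" where
  "perp \<sigma> = {u. linear u \<and> (\<forall>x\<in>\<sigma>. u x = 0)}"

definition cone_gen :: "'a::euclidean_space set \<Rightarrow> 'a set" where
  "cone_gen S = {(\<Sum>x\<in>S. c x *\<^sub>R x) | c. \<forall>x\<in>S. c x \<ge> 0}"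

definition N_cone :: "'a::euclidean_space set \<Rightarrow> 'a set \<Rightarrow> bool" where
  "N_cone N \<sigma> \<longleftrightarrow> (\<exists>S. finite S \<and> S \<subseteq> N \<and> \<sigma> = cone_gen S)"

definition sharp_cone :: "'a::euclidean_space set \<Rightarrow> bool" where
  "sharp_cone \<sigma> \<longleftrightarrow> (\<forall>x. x \<in> \<sigma> \<and> - x \<in> \<sigma> \<longrightarrow> x = 0)"

definition cone_face :: "'a::euclidean_space set \<Rightarrow> 'a set \<Rightarrow> bool" where
  "cone_face \<tau> \<sigma> \<longleftrightarrow> (\<exists>u. linear u \<and> (\<forall>x\<in>\<sigma>. u x \<ge> (0::real)) \<and> \<tau> = {x\<in>\<sigma>. u x = 0})"

definition N_fan :: "'a::euclidean_space set \<Rightarrow> 'a set set \<Rightarrow> bool" where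
  "N_fan N \<Sigma> \<longleftrightarrow> finite \<Sigma> \<and>
     (\<forall>\<sigma>\<in>\<Sigma>. N_cone N \<sigma> \<and> sharp_cone \<sigma>) \<and>
     (\<forall>\<sigma>\<in>\<Sigma>. \<forall>\<tau>. cone_face \<tau> \<sigma> \<longrightarrow> \<tau> \<in> \<Sigma>) \<and>
     (\<forall>\<sigma>\<in>\<Sigma>. \<forall>\<sigma>'\<in>\<Sigma>. cone_face (\<sigma> \<inter> \<sigma>') \<sigma> \<and> cone_face (\<sigma> \<inter> \<sigma>') \<sigma>')"

definition rel_full_dim :: "'a::euclidean_space set set \<Rightarrow> bool" where
  "rel_full_dim \<Sigma> \<longleftrightarrow> (\<exists>\<sigma>\<in>\<Sigma>. dim \<sigma> = dim (span (\<Union>\<Sigma>)))"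

text \<open>Families (m_\<sigma>)_{\<sigma>\<in>\<Sigma>} are functions on cones, normalised to 0 outside \<Sigma>.
  Pbar_fam: representatives of classes in P-bar (families in (W*)^\<Sigma> with the compatibility
  condition).  Pic_rel: representatives of zero in Pic = P-bar / K_W, i.e. families congruent
  modulo \<Prod> sigma-perp in W* to a diagonal family (m + sigma-dual)_\<sigma>, m \<in> W*.\<close>
definition Pbar_fam :: "real set \<Rightarrow> 'a::euclidean_space set \<Rightarrow> 'a set set \<Rightarrow> ('a set \<Rightarrow> 'a \<Rightarrow> real) set" where
  "Pbar_fam R W \<Sigma> = {m. (\<forall>\<sigma>. \<sigma> \<notin> \<Sigma> \<longrightarrow> m \<sigma> = (\<lambda>_. 0)) \<and>
      (\<forall>\<sigma>\<in>\<Sigma>. m \<sigma> \<in> dual_module R W) \<and>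
      (\<forall>\<sigma>\<in>\<Sigma>. \<forall>\<tau>\<in>\<Sigma>. cone_face \<tau> \<sigma> \<longrightarrow> (\<lambda>x. m \<sigma> x - m \<tau> x) \<in> perp \<tau>)}"

definition Pic_rel :: "real set \<Rightarrow> 'a::euclidean_space set \<Rightarrow> 'a set set \<Rightarrow> ('a set \<Rightarrow> 'a \<Rightarrow> real) set" where
  "Pic_rel R W \<Sigma> = {m. (\<forall>\<sigma>. \<sigma> \<notin> \<Sigma> \<longrightarrow> m \<sigma> = (\<lambda>_. 0)) \<and>
      (\<forall>\<sigma>\<in>\<Sigma>. m \<sigma> \<in> dual_module R W) \<and>
      (\<exists>u\<in>dual_module R W. \<forall>\<sigma>\<in>\<Sigma>. (\<lambda>x. m \<sigma> x - u x) \<in> perp \<sigma>)}"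

definition quotient_free_finite_rank :: "real set \<Rightarrow> ('i \<Rightarrow> 'j \<Rightarrow> real) set \<Rightarrow> ('i \<Rightarrow> 'j \<Rightarrow> real) set \<Rightarrow> bool" where
  "quotient_free_finite_rank R M L \<longleftrightarrow> (\<exists>(k::nat) (e :: nat \<Rightarrow> 'i \<Rightarrow> 'j \<Rightarrow> real).
      (\<forall>i<k. e i \<in> M) \<and>
      (\<forall>m\<in>M. \<exists>r. (\<forall>i<k. r i \<in> R) \<and> (\<lambda>s x. m s x - (\<Sum>i<k. r i * e i s x)) \<in> L) \<and>
      (\<forall>r. (\<forall>i<k. r i \<in> R) \<and> (\<lambda>s x. \<Sum>i<k. r i * e i s x) \<in> L \<longrightarrow> (\<forall>i<k. r i = 0)))"

definition Pic_W_free :: "real set \<Rightarrow> 'a::euclidean_space set \<Rightarrow> 'a set set \<Rightarrow> bool" where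
  "Pic_W_free R W \<Sigma> \<longleftrightarrow> quotient_free_finite_rank R (Pbar_fam R W \<Sigma>) (Pic_rel R W \<Sigma>)"

end

theory Submission
  imports Defs
begin

text \<open>Fix a cone \<sigma>0 of maximal dimension and, for each cone \<sigma>, a finite generating set S \<sigma>.
  Sending a family m to the differences m \<sigma> y - m \<sigma>0 y for the generators y of all cones is an
  R-linear map from P-bar into the finite free module R^T, T = {(\<sigma>, y). y \<in> S \<sigma>}. Its kernel is
  exactly K_W: a family vanishing there is the diagonal family of m \<sigma>0, and conversely a diagonal
  family of u agrees with u on \<sigma>0 and hence, by relative full-dimensionality, on the span of
  the whole fan. So Pic_W embeds into R^T, and a submodule of a finite free module over a
  principal ideal domain is free (by induction on the number of coordinates).\<close>

lemma subring_of_realsD: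
  assumes "subring_of_reals R"
  shows "0 \<in> R" "1 \<in> R" "x \<in> R \<Longrightarrow> y \<in> R \<Longrightarrow> x + y \<in> R"
    "x \<in> R \<Longrightarrow> y \<in> R \<Longrightarrow> x - y \<in> R" "x \<in> R \<Longrightarrow> y \<in> R \<Longrightarrow> x * y \<in> R"
  using assms unfolding subring_of_reals_def by auto

lemma subring_of_reals_uminus: "subring_of_reals R \<Longrightarrow> x \<in> R \<Longrightarrow> - x \<in> R"
  using subring_of_realsD(1)[of R] subring_of_realsD(4)[of R 0 x] by simp

lemma principal_ideal_subring_subring: "principal_ideal_subring R \<Longrightarrow> subring_of_reals R"
  unfolding principal_ideal_subring_def by blast

definition R_submodule :: "real set \<Rightarrow> ('i \<Rightarrow> real) set \<Rightarrow> bool" where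
  "R_submodule R M \<longleftrightarrow> (\<lambda>i. 0) \<in> M \<and> (\<forall>v\<in>M. \<forall>w\<in>M. (\<lambda>i. v i + w i) \<in> M) \<and>
     (\<forall>r\<in>R. \<forall>v\<in>M. (\<lambda>i. r * v i) \<in> M)"

definition is_R_basis :: "real set \<Rightarrow> ('i \<Rightarrow> real) set \<Rightarrow> nat \<Rightarrow> (nat \<Rightarrow> 'i \<Rightarrow> real) \<Rightarrow> bool" where
  "is_R_basis R M k b \<longleftrightarrow> (\<forall>j<k. b j \<in> M) \<and>
     (\<forall>v\<in>M. \<exists>r. (\<forall>j<k. r j \<in> R) \<and> v = (\<lambda>i. \<Sum>j<k. r j * b j i)) \<and>
     (\<forall>r. (\<lambda>i. \<Sum>j<k. r j * b j i) = (\<lambda>i. 0) \<longrightarrow> (\<forall>j<k. r j = 0))"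

lemma is_R_basisD:
  assumes "is_R_basis R M k b"
  shows "j < k \<Longrightarrow> b j \<in> M"
    and "v \<in> M \<Longrightarrow> \<exists>r. (\<forall>j<k. r j \<in> R) \<and> v = (\<lambda>i. \<Sum>j<k. r j * b j i)"
    and "(\<lambda>i. \<Sum>j<k. r j * b j i) = (\<lambda>i. 0) \<Longrightarrow> j < k \<Longrightarrow> r j = 0"
  using assms unfolding is_R_basis_def by blast+

lemma R_submodule_diff:
  assumes "subring_of_reals R" "R_submodule R M" "v \<in> M" "w \<in> M" "r \<in> R"
  shows "(\<lambda>i. v i - r * w i) \<in> M"
proof -
  have neg: "(\<lambda>i. (- r) * w i) \<in> M"
    using assms subring_of_reals_uminus unfolding R_submodule_def by blast
  have add: "\<forall>v\<in>M. \<forall>w\<in>M. (\<lambda>i. v i + w i) \<in> M"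
    using assms(2) unfolding R_submodule_def by blast
  show ?thesis using bspec[OF bspec[OF add assms(3)] neg] by simp
qed

lemma R_submodule_coordinate_kernel:
  "R_submodule R M \<Longrightarrow> R_submodule R {v \<in> M. v t = 0}"
  unfolding R_submodule_def by auto

lemma coordinate_ideal:
  assumes sr: "subring_of_reals R" and M: "R_submodule R M" and val: "\<forall>v\<in>M. v t \<in> R"
  shows "real_subring_ideal R {v t | v. v \<in> M}"
  unfolding real_subring_ideal_def
proof (intro conjI ballI)
  show "{v t | v. v \<in> M} \<subseteq> R" using val by auto
  show "0 \<in> {v t | v. v \<in> M}" using M unfolding R_submodule_def by force
next
  fix x y assume "x \<in> {v t | v. v \<in> M}" "y \<in> {v t | v. v \<in> M}"
  then obtain v w where v: "v \<in> M" "x = v t" and w: "w \<in> M" "y = w t" by auto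
  have "(\<lambda>i. v i + w i) \<in> M" using M v w unfolding R_submodule_def by blast
  then show "x + y \<in> {v t | v. v \<in> M}" using v w by force
  have "(\<lambda>i. v i - 1 * w i) \<in> M"
    using R_submodule_diff[OF sr M v(1) w(1) subring_of_realsD(2)[OF sr]] .
  then show "x - y \<in> {v t | v. v \<in> M}" using v w by force
next
  fix r x assume "r \<in> R" "x \<in> {v t | v. v \<in> M}"
  then obtain v where v: "v \<in> M" "x = v t" by auto
  have "(\<lambda>i. r * v i) \<in> M" using M v \<open>r \<in> R\<close> unfolding R_submodule_def by blast
  then show "r * x \<in> {v t | v. v \<in> M}" using v by force
qed

lemma is_R_basis_extend:
  assumes sr: "subring_of_reals R" and M: "R_submodule R M"
    and basis: "is_R_basis R {v \<in> M. v t = 0} k b"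
    and w: "w \<in> M" "w t \<noteq> 0" and gen: "\<forall>v\<in>M. \<exists>r\<in>R. v t = r * w t"
  shows "is_R_basis R M (Suc k) (b(k := w))"
proof -
  have bM: "\<And>j. j < k \<Longrightarrow> b j \<in> M" and bt: "\<And>j. j < k \<Longrightarrow> b j t = 0"
    using is_R_basisD(1)[OF basis] by auto
  have sum_upd: "(\<Sum>j<k. (r(k := c)) j * (b(k := w)) j i) = (\<Sum>j<k. r j * b j i)" for r c i
    by (rule sum.cong) auto
  show ?thesis
    unfolding is_R_basis_def
  proof (intro conjI allI impI ballI)
    show "(b(k := w)) j \<in> M" if "j < Suc k" for j
      using that bM w by (cases "j = k") auto
  next
    fix v assume vM: "v \<in> M"
    then obtain r where rR: "r \<in> R" and vt: "v t = r * w t" using gen by blast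
    have "(\<lambda>i. v i - r * w i) \<in> {v \<in> M. v t = 0}"
      using R_submodule_diff[OF sr M vM w(1) rR] vt by simp
    then obtain s where sR: "\<forall>j<k. s j \<in> R" and s: "(\<lambda>i. v i - r * w i) = (\<lambda>i. \<Sum>j<k. s j * b j i)"
      using is_R_basisD(2)[OF basis] by blast
    have "v = (\<lambda>i. \<Sum>j<Suc k. (s(k := r)) j * (b(k := w)) j i)"
      using s by (simp add: fun_eq_iff sum_upd algebra_simps)
    moreover have "\<forall>j<Suc k. (s(k := r)) j \<in> R" using sR rR by (simp add: less_Suc_eq)
    ultimately show "\<exists>r. (\<forall>j<Suc k. r j \<in> R) \<and> v = (\<lambda>i. \<Sum>j<Suc k. r j * (b(k := w)) j i)"
      by blast
  next
    fix r j assume zero: "(\<lambda>i. \<Sum>j<Suc k. r j * (b(k := w)) j i) = (\<lambda>i. 0)" and "j < Suc k"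
    have eq: "(\<Sum>j<k. r j * b j i) + r k * w i = 0" for i
      using fun_cong[OF zero, of i] sum_upd[of r "r k" i] by simp
    have rk: "r k = 0" using eq[of t] bt w(2) by simp
    then have "(\<lambda>i. \<Sum>j<k. r j * b j i) = (\<lambda>i. 0)" using eq by simp
    then have "\<forall>j<k. r j = 0" using is_R_basisD(3)[OF basis] by blast
    then show "r j = 0" using \<open>j < Suc k\<close> rk by (cases "j = k") auto
  qed
qed

lemma finite_support_R_submodule_free:
  assumes pid: "principal_ideal_subring R" and "finite F" and "R_submodule R M"
    and "\<forall>v\<in>M. (\<forall>i. i \<notin> F \<longrightarrow> v i = 0) \<and> (\<forall>i. v i \<in> R)"
  shows "\<exists>k b. is_R_basis R M k b"
  using assms(2-)
proof (induction F arbitrary: M rule: finite_induct)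
  case empty
  then have "\<forall>v\<in>M. v = (\<lambda>i. 0)" by auto
  then have "is_R_basis R M 0 b" for b unfolding is_R_basis_def by simp
  then show ?case by blast
next
  case (insert t F)
  have sr: "subring_of_reals R" using pid by (rule principal_ideal_subring_subring)
  have "\<forall>v\<in>{v \<in> M. v t = 0}. (\<forall>i. i \<notin> F \<longrightarrow> v i = 0) \<and> (\<forall>i. v i \<in> R)"
    using insert.prems(2) by auto
  then obtain k b where basis: "is_R_basis R {v \<in> M. v t = 0} k b"
    using insert.IH[OF R_submodule_coordinate_kernel[OF insert.prems(1)]] by blast
  have "real_subring_ideal R {v t | v. v \<in> M}"
    using coordinate_ideal[OF sr insert.prems(1)] insert.prems(2) by blast
  then obtain a where Ia: "{v t | v. v \<in> M} = {r * a | r. r \<in> R}"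
    using pid unfolding principal_ideal_subring_def by blast
  have coord: "\<exists>r\<in>R. v t = r * a" if "v \<in> M" for v
  proof -
    have "v t \<in> {v t | v. v \<in> M}" using that by blast
    then show ?thesis unfolding Ia by blast
  qed
  show ?case
  proof (cases "a = 0")
    case True
    then have "{v \<in> M. v t = 0} = M" using coord by auto
    then show ?thesis using basis by auto
  next
    case False
    have "a \<in> {v t | v. v \<in> M}" unfolding Ia using subring_of_realsD(2)[OF sr] by force
    then obtain w where w: "w \<in> M" "w t = a" by blast
    then show ?thesis
      using is_R_basis_extend[OF sr insert.prems(1) basis w(1)] coord False by blast
  qed
qed

definition lincomb_closed :: "real set \<Rightarrow> ('i \<Rightarrow> 'j \<Rightarrow> real) set \<Rightarrow> bool" where
  "lincomb_closed R M \<longleftrightarrow> (\<lambda>s x. 0) \<in> M \<and>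
     (\<forall>f\<in>M. \<forall>g\<in>M. \<forall>a\<in>R. \<forall>b\<in>R. (\<lambda>s x. a * f s x + b * g s x) \<in> M)"

definition lincomb_map :: "(('i \<Rightarrow> 'j \<Rightarrow> real) \<Rightarrow> 't \<Rightarrow> real) \<Rightarrow> bool" where
  "lincomb_map \<Phi> \<longleftrightarrow> (\<forall>f g a b. \<Phi> (\<lambda>s x. a * f s x + b * g s x) = (\<lambda>p. a * \<Phi> f p + b * \<Phi> g p))"

lemma lincomb_closedD:
  assumes "lincomb_closed R M"
  shows "(\<lambda>s x. 0) \<in> M"
    and "f \<in> M \<Longrightarrow> g \<in> M \<Longrightarrow> a \<in> R \<Longrightarrow> b \<in> R \<Longrightarrow> (\<lambda>s x. a * f s x + b * g s x) \<in> M"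
  using assms unfolding lincomb_closed_def by blast+

lemma lincomb_mapD:
  "lincomb_map \<Phi> \<Longrightarrow> \<Phi> (\<lambda>s x. a * f s x + b * g s x) = (\<lambda>p. a * \<Phi> f p + b * \<Phi> g p)"
  unfolding lincomb_map_def by blast

lemma lincomb_closed_sum:
  assumes sr: "subring_of_reals R" and M: "lincomb_closed R M"
  shows "\<forall>i<k. f i \<in> M \<Longrightarrow> \<forall>i<k. r i \<in> R \<Longrightarrow> (\<lambda>s x. \<Sum>i<(k::nat). r i * f i s x) \<in> M"
proof (induction k)
  case 0
  then show ?case using lincomb_closedD(1)[OF M] by simp
next
  case (Suc k)
  have "(\<lambda>s x. 1 * (\<Sum>i<k. r i * f i s x) + r k * f k s x) \<in> M"
    using Suc subring_of_realsD(2)[OF sr] by (intro lincomb_closedD(2)[OF M]) auto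
  then show ?case by simp
qed

lemma lincomb_map_zero: "lincomb_map \<Phi> \<Longrightarrow> \<Phi> (\<lambda>s x. 0) = (\<lambda>p. 0)"
  using lincomb_mapD[of \<Phi> 0 "\<lambda>s x. 0" 0 "\<lambda>s x. 0"] by simp

lemma lincomb_map_sum:
  assumes "lincomb_map \<Phi>"
  shows "\<Phi> (\<lambda>s x. \<Sum>i<(k::nat). r i * f i s x) = (\<lambda>p. \<Sum>i<k. r i * \<Phi> (f i) p)"
proof (induction k)
  case 0
  then show ?case using lincomb_map_zero[OF assms] by simp
next
  case (Suc k)
  then show ?case
    using lincomb_mapD[OF assms, of 1 "\<lambda>s x. \<Sum>i<k. r i * f i s x" "r k" "f k"] by simp
qed

lemma R_submodule_image:
  assumes sr: "subring_of_reals R" and M: "lincomb_closed R M" and \<Phi>: "lincomb_map \<Phi>"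
  shows "R_submodule R (\<Phi> ` M)"
  unfolding R_submodule_def
proof (intro conjI ballI)
  show "(\<lambda>p. 0) \<in> \<Phi> ` M"
    by (rule image_eqI[where f = \<Phi>, OF lincomb_map_zero[OF \<Phi>, symmetric] lincomb_closedD(1)[OF M]])
next
  fix u v assume "u \<in> \<Phi> ` M" "v \<in> \<Phi> ` M"
  then obtain f g where fg: "f \<in> M" "g \<in> M" and "u = \<Phi> f" "v = \<Phi> g" by blast
  then have "(\<lambda>p. u p + v p) = \<Phi> (\<lambda>s x. 1 * f s x + 1 * g s x)"
    unfolding lincomb_mapD[OF \<Phi>] by simp
  moreover have "(\<lambda>s x. 1 * f s x + 1 * g s x) \<in> M"
    using fg subring_of_realsD(2)[OF sr] by (intro lincomb_closedD(2)[OF M])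
  ultimately show "(\<lambda>p. u p + v p) \<in> \<Phi> ` M" by (rule image_eqI)
next
  fix r u assume "r \<in> R" "u \<in> \<Phi> ` M"
  then obtain f where f: "f \<in> M" and "u = \<Phi> f" by blast
  then have "(\<lambda>p. r * u p) = \<Phi> (\<lambda>s x. r * f s x + 0 * f s x)"
    unfolding lincomb_mapD[OF \<Phi>] by simp
  moreover have "(\<lambda>s x. r * f s x + 0 * f s x) \<in> M"
    using f \<open>r \<in> R\<close> subring_of_realsD(1)[OF sr] by (intro lincomb_closedD(2)[OF M])
  ultimately show "(\<lambda>p. r * u p) \<in> \<Phi> ` M" by (rule image_eqI)
qed

lemma quotient_free_finite_rank_kernel:
  fixes \<Phi> :: "('i \<Rightarrow> 'j \<Rightarrow> real) \<Rightarrow> 't \<Rightarrow> real"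
  assumes pid: "principal_ideal_subring R" and "finite T"
    and M: "lincomb_closed R M" and \<Phi>: "lincomb_map \<Phi>"
    and \<Phi>_support: "\<And>m p. m \<in> M \<Longrightarrow> p \<notin> T \<Longrightarrow> \<Phi> m p = 0"
    and \<Phi>_values: "\<And>m p. m \<in> M \<Longrightarrow> \<Phi> m p \<in> R"
    and kernel: "\<And>m. m \<in> M \<Longrightarrow> m \<in> L \<longleftrightarrow> \<Phi> m = (\<lambda>p. 0)"
  shows "quotient_free_finite_rank R M L"
proof -
  have sr: "subring_of_reals R" using pid by (rule principal_ideal_subring_subring)
  have "\<forall>v\<in>\<Phi> ` M. (\<forall>p. p \<notin> T \<longrightarrow> v p = 0) \<and> (\<forall>p. v p \<in> R)"
    using \<Phi>_support \<Phi>_values by blast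
  from finite_support_R_submodule_free[OF pid \<open>finite T\<close> R_submodule_image[OF sr M \<Phi>] this]
  obtain k b where basis: "is_R_basis R (\<Phi> ` M) k b" by blast
  then have "\<forall>j. \<exists>m. j < k \<longrightarrow> m \<in> M \<and> \<Phi> m = b j"
    using is_R_basisD(1) by (metis imageE)
  then obtain e where e: "\<And>j. j < k \<Longrightarrow> e j \<in> M \<and> \<Phi> (e j) = b j" by metis
  have sum_e: "(\<lambda>s x. \<Sum>i<k. r i * e i s x) \<in> M" if "\<forall>i<k. r i \<in> R" for r
    using e that by (intro lincomb_closed_sum[OF sr M]) auto
  have \<Phi>_sum_e: "\<Phi> (\<lambda>s x. \<Sum>i<k. r i * e i s x) = (\<lambda>p. \<Sum>i<k. r i * b i p)" for r
    unfolding lincomb_map_sum[OF \<Phi>] using e by (auto intro!: sum.cong)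
  show ?thesis
    unfolding quotient_free_finite_rank_def
  proof (intro exI[of _ k] exI[of _ e] conjI allI impI ballI)
    show "e i \<in> M" if "i < k" for i using e[OF that] by blast
  next
    fix m assume "m \<in> M"
    then obtain r where rR: "\<forall>j<k. r j \<in> R" and r: "\<Phi> m = (\<lambda>p. \<Sum>j<k. r j * b j p)"
      using is_R_basisD(2)[OF basis] by blast
    have "(\<lambda>s x. 1 * m s x + (- 1) * (\<Sum>i<k. r i * e i s x)) \<in> M"
      using \<open>m \<in> M\<close> sum_e[OF rR] subring_of_realsD(2)[OF sr] subring_of_reals_uminus[OF sr]
      by (intro lincomb_closedD(2)[OF M]) auto
    moreover have "\<Phi> (\<lambda>s x. 1 * m s x + (- 1) * (\<Sum>i<k. r i * e i s x)) = (\<lambda>p. 0)"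
      unfolding lincomb_mapD[OF \<Phi>] \<Phi>_sum_e r by simp
    ultimately have "(\<lambda>s x. m s x - (\<Sum>i<k. r i * e i s x)) \<in> L"
      using kernel by simp
    then show "\<exists>r. (\<forall>i<k. r i \<in> R) \<and> (\<lambda>s x. m s x - (\<Sum>i<k. r i * e i s x)) \<in> L"
      using rR by blast
  next
    fix r j assume r: "(\<forall>i<k. r i \<in> R) \<and> (\<lambda>s x. \<Sum>i<k. r i * e i s x) \<in> L" and "j < k"
    then have "\<Phi> (\<lambda>s x. \<Sum>i<k. r i * e i s x) = (\<lambda>p. 0)"
      using kernel[OF sum_e[of r]] by blast
    then have "(\<lambda>p. \<Sum>i<k. r i * b i p) = (\<lambda>p. 0)" unfolding \<Phi>_sum_e .
    then show "r j = 0" using is_R_basisD(3)[OF basis] \<open>j < k\<close> by blast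
  qed
qed

lemma subset_Rspan: "1 \<in> R \<Longrightarrow> N \<subseteq> Rspan R N"
proof
  fix x assume "1 \<in> R" "x \<in> N"
  then show "x \<in> Rspan R N" unfolding Rspan_def
    by (intro CollectI exI[of _ "{x}"] exI[of _ "\<lambda>_. 1"]) auto
qed

lemma rel_full_dim_spanning_cone:
  assumes "rel_full_dim \<Sigma>"
  obtains \<sigma>0 where "\<sigma>0 \<in> \<Sigma>" "\<And>\<sigma>. \<sigma> \<in> \<Sigma> \<Longrightarrow> \<sigma> \<subseteq> span \<sigma>0"
proof -
  obtain \<sigma>0 where \<sigma>0: "\<sigma>0 \<in> \<Sigma>" and dim: "dim \<sigma>0 = dim (span (\<Union>\<Sigma>))"
    using assms unfolding rel_full_dim_def by blast
  have "span \<sigma>0 = span (\<Union>\<Sigma>)"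
    using \<sigma>0 dim by (intro dim_eq_span) auto
  then have "\<sigma> \<subseteq> span \<sigma>0" if "\<sigma> \<in> \<Sigma>" for \<sigma>
    using that span_superset[of "\<Union>\<Sigma>"] by auto
  with \<sigma>0 show ?thesis by (rule that)
qed

lemma cone_gen_superset: "finite S \<Longrightarrow> S \<subseteq> cone_gen S"
proof
  fix x assume "finite S" "x \<in> S"
  have "(\<Sum>y\<in>S. (if y = x then 1 else 0) *\<^sub>R y) = (\<Sum>y\<in>S. if y = x then y else 0)"
    by (rule sum.cong) auto
  then have "(\<Sum>y\<in>S. (if y = x then 1 else 0) *\<^sub>R y) = x"
    using \<open>finite S\<close> \<open>x \<in> S\<close> by (simp add: sum.delta')
  then show "x \<in> cone_gen S"
    unfolding cone_gen_def by (intro CollectI exI[of _ "\<lambda>y. if y = x then 1 else 0"]) auto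
qed

lemma linear_vanishes_on_cone_gen:
  fixes f :: "'a::euclidean_space \<Rightarrow> real"
  assumes "linear f" "\<forall>y\<in>S. f y = 0" "x \<in> cone_gen S"
  shows "f x = 0"
proof -
  obtain c where x: "x = (\<Sum>y\<in>S. c y *\<^sub>R y)" using assms(3) unfolding cone_gen_def by auto
  show ?thesis unfolding x using assms(1,2) by (simp add: linear_sum linear_scale)
qed

lemma Pbar_fam_lincomb:
  assumes sr: "subring_of_reals R" and m1: "m1 \<in> Pbar_fam R W \<Sigma>" and m2: "m2 \<in> Pbar_fam R W \<Sigma>"
    and "a \<in> R" "b \<in> R"
  shows "(\<lambda>\<sigma> x. a * m1 \<sigma> x + b * m2 \<sigma> x) \<in> Pbar_fam R W \<Sigma>"
proof -
  have lin: "linear (\<lambda>x. a * f x + b * g x)" if "linear f" "linear g" for f g :: "'a \<Rightarrow> real"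
    using that real_vector.module_hom_scale[of f a] real_vector.module_hom_scale[of g b]
    by (auto intro!: linear_compose_add)
  have dual: "(\<lambda>x. a * f x + b * g x) \<in> dual_module R W"
    if "f \<in> dual_module R W" "g \<in> dual_module R W" for f g
    using that \<open>a \<in> R\<close> \<open>b \<in> R\<close> lin unfolding dual_module_def by (auto simp: subring_of_realsD[OF sr])
  have perp: "(\<lambda>x. (a * f x + b * g x) - (a * f' x + b * g' x)) \<in> perp \<tau>"
    if "(\<lambda>x. f x - f' x) \<in> perp \<tau>" "(\<lambda>x. g x - g' x) \<in> perp \<tau>" for f f' g g' and \<tau> :: "'a set"
  proof -
    have "(\<lambda>x. (a * f x + b * g x) - (a * f' x + b * g' x)) = (\<lambda>x. a * (f x - f' x) + b * (g x - g' x))"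
      by (simp add: algebra_simps)
    then show ?thesis using that lin unfolding perp_def by auto
  qed
  show ?thesis
    using m1 m2 dual perp unfolding Pbar_fam_def by simp
qed

lemma lincomb_closed_Pbar_fam:
  assumes "subring_of_reals R"
  shows "lincomb_closed R (Pbar_fam R W \<Sigma>)"
proof -
  have "(\<lambda>\<sigma> x. 0) \<in> Pbar_fam R W \<Sigma>"
    unfolding Pbar_fam_def dual_module_def perp_def
    by (auto simp: subring_of_realsD(1)[OF assms] real_vector.linear_zero)
  then show ?thesis
    unfolding lincomb_closed_def using Pbar_fam_lincomb[OF assms] by blast
qed

lemma Pic_rel_iff_agree_on_generators:
  assumes \<sigma>0: "\<sigma>0 \<in> \<Sigma>" and spans: "\<And>\<sigma>. \<sigma> \<in> \<Sigma> \<Longrightarrow> \<sigma> \<subseteq> span \<sigma>0"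
    and gens: "\<And>\<sigma>. \<sigma> \<in> \<Sigma> \<Longrightarrow> finite (S \<sigma>) \<and> \<sigma> = cone_gen (S \<sigma>)"
    and m: "m \<in> Pbar_fam R W \<Sigma>"
  shows "m \<in> Pic_rel R W \<Sigma> \<longleftrightarrow> (\<forall>\<sigma>\<in>\<Sigma>. \<forall>y\<in>S \<sigma>. m \<sigma> y = m \<sigma>0 y)"
proof
  assume "m \<in> Pic_rel R W \<Sigma>"
  then obtain u where u: "\<And>\<sigma>. \<sigma> \<in> \<Sigma> \<Longrightarrow> (\<lambda>x. m \<sigma> x - u x) \<in> perp \<sigma>"
    unfolding Pic_rel_def by blast
  show "\<forall>\<sigma>\<in>\<Sigma>. \<forall>y\<in>S \<sigma>. m \<sigma> y = m \<sigma>0 y"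
  proof (intro ballI)
    fix \<sigma> y assume "\<sigma> \<in> \<Sigma>" "y \<in> S \<sigma>"
    then have y: "y \<in> \<sigma>" using gens cone_gen_superset by blast
    then have "m \<sigma> y = u y" using u[OF \<open>\<sigma> \<in> \<Sigma>\<close>] unfolding perp_def by auto
    moreover have "m \<sigma>0 y - u y = 0"
      using u[OF \<sigma>0] spans[OF \<open>\<sigma> \<in> \<Sigma>\<close>] y unfolding perp_def
      using linear_eq_0_on_span[of "\<lambda>x. m \<sigma>0 x - u x" \<sigma>0 y] by auto
    ultimately show "m \<sigma> y = m \<sigma>0 y" by simp
  qed
next
  assume agree: "\<forall>\<sigma>\<in>\<Sigma>. \<forall>y\<in>S \<sigma>. m \<sigma> y = m \<sigma>0 y"
  have dual: "\<And>\<sigma>. \<sigma> \<in> \<Sigma> \<Longrightarrow> m \<sigma> \<in> dual_module R W" using m unfolding Pbar_fam_def by blast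
  have "(\<lambda>x. m \<sigma> x - m \<sigma>0 x) \<in> perp \<sigma>" if "\<sigma> \<in> \<Sigma>" for \<sigma>
  proof -
    have lin: "linear (\<lambda>x. m \<sigma> x - m \<sigma>0 x)"
      using dual[OF that] dual[OF \<sigma>0] unfolding dual_module_def by (auto intro: linear_compose_sub)
    then show ?thesis
      using linear_vanishes_on_cone_gen[OF lin] agree that gens[OF that] unfolding perp_def by auto
  qed
  with m dual[OF \<sigma>0] show "m \<in> Pic_rel R W \<Sigma>"
    unfolding Pic_rel_def Pbar_fam_def by (intro CollectI conjI bexI[of _ "m \<sigma>0"]) auto
qed

theorem proposition1p90:
  fixes R :: "real set" and N :: "'a::euclidean_space set" and \<Sigma> :: "'a set set"
  assumes "principal_ideal_subring R"
    and "is_lattice N"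
    and "N_fan N \<Sigma>"
    and "rel_full_dim \<Sigma>"
  shows "Pic_W_free R (Rspan R N) \<Sigma>"
proof -
  have sr: "subring_of_reals R" using assms(1) by (rule principal_ideal_subring_subring)
  obtain \<sigma>0 where \<sigma>0: "\<sigma>0 \<in> \<Sigma>" and spans: "\<And>\<sigma>. \<sigma> \<in> \<Sigma> \<Longrightarrow> \<sigma> \<subseteq> span \<sigma>0"
    using rel_full_dim_spanning_cone[OF assms(4)] by blast
  have "finite \<Sigma>" and "\<forall>\<sigma>\<in>\<Sigma>. \<exists>S. finite S \<and> S \<subseteq> N \<and> \<sigma> = cone_gen S"
    using assms(3) unfolding N_fan_def N_cone_def by auto
  then obtain S where S: "\<And>\<sigma>. \<sigma> \<in> \<Sigma> \<Longrightarrow> finite (S \<sigma>) \<and> S \<sigma> \<subseteq> N \<and> \<sigma> = cone_gen (S \<sigma>)"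
    by metis
  define T where "T = (SIGMA \<sigma>:\<Sigma>. S \<sigma>)"
  define \<Phi> where "\<Phi> m p = (if p \<in> T then m (fst p) (snd p) - m \<sigma>0 (snd p) else 0)"
    for m :: "'a set \<Rightarrow> 'a \<Rightarrow> real" and p
  have gens_in_W: "\<And>\<sigma> y. \<sigma> \<in> \<Sigma> \<Longrightarrow> y \<in> S \<sigma> \<Longrightarrow> y \<in> Rspan R N"
    using S subset_Rspan[OF subring_of_realsD(2)[OF sr]] by blast
  show ?thesis
    unfolding Pic_W_free_def
  proof (rule quotient_free_finite_rank_kernel[where \<Phi> = \<Phi> and T = T, OF assms(1)])
    show "finite T" unfolding T_def using \<open>finite \<Sigma>\<close> S by auto
    show "lincomb_closed R (Pbar_fam R (Rspan R N) \<Sigma>)" using sr by (rule lincomb_closed_Pbar_fam)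
    show "lincomb_map \<Phi>" unfolding lincomb_map_def by (auto simp: \<Phi>_def algebra_simps)
    show "\<Phi> m p = 0" if "p \<notin> T" for m p using that by (simp add: \<Phi>_def)
  next
    fix m p assume "m \<in> Pbar_fam R (Rspan R N) \<Sigma>"
    then have "\<And>\<sigma> y. \<sigma> \<in> \<Sigma> \<Longrightarrow> y \<in> Rspan R N \<Longrightarrow> m \<sigma> y \<in> R"
      unfolding Pbar_fam_def dual_module_def by blast
    then show "\<Phi> m p \<in> R"
      using \<sigma>0 gens_in_W subring_of_realsD(1)[OF sr]
      by (auto simp: \<Phi>_def T_def intro!: subring_of_realsD(4)[OF sr])
  next
    fix m assume "m \<in> Pbar_fam R (Rspan R N) \<Sigma>"
    then show "m \<in> Pic_rel R (Rspan R N) \<Sigma> \<longleftrightarrow> \<Phi> m = (\<lambda>p. 0)"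
      using Pic_rel_iff_agree_on_generators[OF \<sigma>0 spans, of S] S
      by (auto simp: \<Phi>_def T_def fun_eq_iff)
  qed
qed

end
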